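(* (i) Let $v_2^\star$ denote the Switcher's optimal value function (for fixed Exploiter policy $\pi^{\mathrm{exploit}}$) and $\mathcal M$ the intervention operator associated with the optimal exploration policy. Then the optimal Switcher's intervention times are given recursively by $$\tau_k=\inf\{t>\tau_{k-1}: (\mathcal M v_2^\star)(s_t)=v_2^\star(s_t)\}.$$ (ii) For $l>0$, denote by $\mu_l(\mathfrak g)$ the number of switch activations performed by the Switcher under its (optimal) switching policy $\mathfrak g$ when $\max_{(s,a)\in\mathcal S\times\mathcal A}L(s,a)=l$. Then $\lim_{l\to0}\mu_l(\mathfrak g)=0$.
   Context: Setting (a two-agent game). $\mathcal S$ is a countable state space, $\mathcal A$ a finite action set, $\mathcal A^{\mathrm{exploit}},\mathcal A^{\mathrm{xplr}}\subseteq\mathcal A$; $P(s'\mid a,s)$ is a transition kernel; $L:\mathcal S\times\mathcal A\to[0,\infty)$ is a bounded uncertainty measure; $\gamma\in(0,1)$; $\beta>0$ is an intervention cost. The Exploiter has a Markov policy $\pi^{\mathrm{exploit}}$; the Switcher has an exploration policy $\pi^{\mathrm{xplr}}$ and a switching rule $\mathfrak g:\mathcal S\to\{0,1\}$. At time $t$, if $\mathfrak g(s_t)=1$ (an intervention), the action $a_t\sim\pi^{\mathrm{xplr}}(\cdot\mid s_t)$ is applied and the Switcher receives $-L(s_t,a_t)-\beta$; otherwise $a_t\sim\pi^{\mathrm{exploit}}(\cdot\mid s_t)$ is applied and the Switcher receives $-L(s_t,a_t)$; then $s_{t+1}\sim P(\cdot\mid a_t,s_t)$. The Switcher's value is $v_2(s)=\mathbb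 E[\sum_{t\ge0}\gamma^t r_t\mid s_0=s]$ with $r_t$ its reward at time $t$; the optimal value $v_2^\star$ is the supremum over $(\pi^{\mathrm{xplr}},\mathfrak g)$. Intervention times: $\tau_0=0$ and $\tau_k=\inf\{t>\tau_{k-1}:\mathfrak g(s_t)=1\}$. Intervention operator: for $v:\mathcal S\to\mathbb R$, $(\mathcal M v)(s)=\sum_{a}\pi^{\mathrm{xplr}}(a\mid s)\big[-L(s,a)-\beta+\gamma\sum_{s'}P(s'\mid a,s)v(s')\big]$. Standing assumption: every switching policy performs only finitely many interventions. *)

theory Defs
  imports "HOL-Probability.Probability"
begin

(* P a s         -- the distribution P(. | a, s) of the next state.
   pie s         -- Exploiter's Markov policy pi^exploit(. | s).
   pix s         -- Switcher's exploration policy pi^xplr(. | s).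
   g s           -- switching rule (True = 1 = intervention). *)

definition act :: "('s \<Rightarrow> 'a pmf) \<Rightarrow> ('s \<Rightarrow> 'a pmf) \<Rightarrow> ('s \<Rightarrow> bool) \<Rightarrow> 's \<Rightarrow> 'a pmf" where
  "act pie pix g s = (if g s then pix s else pie s)"

primrec traj :: "('a \<Rightarrow> 's \<Rightarrow> 's pmf) \<Rightarrow> ('s \<Rightarrow> 'a pmf) \<Rightarrow> ('s \<Rightarrow> 'a pmf) \<Rightarrow> ('s \<Rightarrow> bool)
    \<Rightarrow> nat \<Rightarrow> 's \<Rightarrow> ('s \<times> 'a) list pmf" where
  "traj P pie pix g 0 s = return_pmf []"
| "traj P pie pix g (Suc n) s =
     bind_pmf (act pie pix g s) (\<lambda>a.
     bind_pmf (P a s) (\<lambda>s'.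
     bind_pmf (traj P pie pix g n s') (\<lambda>xs. return_pmf ((s, a) # xs))))"

definition sw_reward :: "('s \<Rightarrow> 'a \<Rightarrow> real) \<Rightarrow> real \<Rightarrow> ('s \<Rightarrow> bool) \<Rightarrow> 's \<times> 'a \<Rightarrow> real" where
  "sw_reward L bet g x = - L (fst x) (snd x) - (if g (fst x) then bet else 0)"

definition disc_return :: "('s \<Rightarrow> 'a \<Rightarrow> real) \<Rightarrow> real \<Rightarrow> real \<Rightarrow> ('s \<Rightarrow> bool) \<Rightarrow> ('s \<times> 'a) list \<Rightarrow> real" where
  "disc_return L bet gam g xs = (\<Sum>t<length xs. gam ^ t * sw_reward L bet g (xs ! t))"

definition sw_value :: "('a \<Rightarrow> 's \<Rightarrow> 's pmf) \<Rightarrow> ('s \<Rightarrow> 'a pmf) \<Rightarrow> ('s \<Rightarrow> 'a \<Rightarrow> real) \<Rightarrow> real \<Rightarrow> real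
    \<Rightarrow> ('s \<Rightarrow> 'a pmf) \<Rightarrow> ('s \<Rightarrow> bool) \<Rightarrow> 's \<Rightarrow> real" where
  "sw_value P pie L bet gam pix g s =
     lim (\<lambda>n. measure_pmf.expectation (traj P pie pix g n s) (disc_return L bet gam g))"

definition adm_xplr :: "'a set \<Rightarrow> ('s \<Rightarrow> 'a pmf) \<Rightarrow> bool" where
  "adm_xplr Ax pix \<longleftrightarrow> (\<forall>s. set_pmf (pix s) \<subseteq> Ax)"

definition v_opt :: "('a \<Rightarrow> 's \<Rightarrow> 's pmf) \<Rightarrow> ('s \<Rightarrow> 'a pmf) \<Rightarrow> 'a set \<Rightarrow> ('s \<Rightarrow> 'a \<Rightarrow> real)
    \<Rightarrow> real \<Rightarrow> real \<Rightarrow> 's \<Rightarrow> real" where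
  "v_opt P pie Ax L bet gam s =
     (SUP pg \<in> {pg. adm_xplr Ax (fst pg)}. sw_value P pie L bet gam (fst pg) (snd pg) s)"

definition optimal_pair :: "('a \<Rightarrow> 's \<Rightarrow> 's pmf) \<Rightarrow> ('s \<Rightarrow> 'a pmf) \<Rightarrow> 'a set \<Rightarrow> ('s \<Rightarrow> 'a \<Rightarrow> real)
    \<Rightarrow> real \<Rightarrow> real \<Rightarrow> ('s \<Rightarrow> 'a pmf) \<Rightarrow> ('s \<Rightarrow> bool) \<Rightarrow> bool" where
  "optimal_pair P pie Ax L bet gam pix g \<longleftrightarrow>
     adm_xplr Ax pix \<and> (\<forall>s. sw_value P pie L bet gam pix g s = v_opt P pie Ax L bet gam s)"

definition Mop :: "('a::finite \<Rightarrow> 's \<Rightarrow> 's pmf) \<Rightarrow> ('s \<Rightarrow> 'a \<Rightarrow> real) \<Rightarrow> real \<Rightarrow> real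
    \<Rightarrow> ('s \<Rightarrow> 'a pmf) \<Rightarrow> ('s \<Rightarrow> real) \<Rightarrow> 's \<Rightarrow> real" where
  "Mop P L bet gam pix v s =
     (\<Sum>a\<in>UNIV. pmf (pix s) a * (- L s a - bet + gam * measure_pmf.expectation (P a s) v))"

definition n_interv :: "('a \<Rightarrow> 's \<Rightarrow> 's pmf) \<Rightarrow> ('s \<Rightarrow> 'a pmf) \<Rightarrow> ('s \<Rightarrow> 'a pmf) \<Rightarrow> ('s \<Rightarrow> bool)
    \<Rightarrow> 's \<Rightarrow> ennreal" where
  "n_interv P pie pix g s =
     (SUP n. \<integral>\<^sup>+ xs. of_nat (length (filter (\<lambda>x. g (fst x)) xs)) \<partial>measure_pmf (traj P pie pix g n s))"

end

theory Submission
  imports Defs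
begin

text \<open>
  The value of a fixed switching policy, and the optimal value, are fixed points of Bellman
  operators that are monotone and discount constants by \<open>\<gamma>\<close>; such operators are contractions
  on bounded functions, so their fixed points are unique and obey a comparison principle.

  (i) If \<open>(\<pi>, g)\<close> is optimal, \<open>v\<^sup>\<star>\<close> is the fixed point of its operator: \<open>v\<^sup>\<star> = M v\<^sup>\<star>\<close> where \<open>g\<close>
  intervenes, and \<open>v\<^sup>\<star>\<close> equals the one-step value of letting the Exploiter act elsewhere. Hence
  intervening exactly where \<open>M v\<^sup>\<star> = v\<^sup>\<star>\<close> leaves \<open>v\<^sup>\<star>\<close> a fixed point, and by uniqueness \<open>v\<^sup>\<star>\<close> is
  the value of the new switching rule.

  (ii) With nonnegative costs every value is \<open>\<le> 0\<close>, so an intervention at \<open>s\<close> forces the value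
  at \<open>s\<close> below \<open>-\<beta>\<close>, whereas never intervening guarantees \<open>-l/(1-\<gamma>)\<close>. For \<open>l < \<beta>(1-\<gamma>)\<close> an
  optimal Switcher therefore never intervenes.
\<close>

lemma bounded_range_iff_abs_le:
  fixes f :: "'b \<Rightarrow> real"
  shows "bounded (range f) \<longleftrightarrow> (\<exists>C. \<forall>x. \<bar>f x\<bar> \<le> C)"
  by (simp add: bounded_iff)

lemma integrable_pmf_if_bounded:
  fixes f :: "'b \<Rightarrow> real"
  assumes "bounded (range f)"
  shows "integrable (measure_pmf p) f"
proof -
  obtain C where "\<And>x. \<bar>f x\<bar> \<le> C"
    using assms unfolding bounded_range_iff_abs_le by blast
  then show ?thesis
    by (intro measure_pmf.integrable_const_bound[where B=C]) auto
qed

lemma integrable_measure_pmf_finite_type [simp]: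
  "integrable (measure_pmf p) (f :: 'a::finite \<Rightarrow> real)"
  by (simp add: integrable_measure_pmf_finite)

lemma expectation_le_const:
  fixes f :: "'b \<Rightarrow> real"
  assumes "integrable (measure_pmf p) f" "\<And>x. f x \<le> c"
  shows "measure_pmf.expectation p f \<le> c"
  using assms by (intro measure_pmf.integral_le_const) simp_all

lemma expectation_ge_const:
  fixes f :: "'b \<Rightarrow> real"
  assumes "integrable (measure_pmf p) f" "\<And>x. c \<le> f x"
  shows "c \<le> measure_pmf.expectation p f"
  using assms by (intro measure_pmf.integral_ge_const) simp_all

lemma abs_expectation_le:
  fixes f :: "'b \<Rightarrow> real"
  assumes "\<And>x. \<bar>f x\<bar> \<le> C"
  shows "\<bar>measure_pmf.expectation p f\<bar> \<le> C"
proof -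
  have integrable: "integrable (measure_pmf p) f"
    using assms by (intro integrable_pmf_if_bounded) (auto simp: bounded_range_iff_abs_le)
  have "f x \<le> C" "- C \<le> f x" for x
    using assms[of x] by auto
  then have "measure_pmf.expectation p f \<le> C" "- C \<le> measure_pmf.expectation p f"
    using integrable by (blast intro: expectation_le_const expectation_ge_const)+
  then show ?thesis
    by linarith
qed

lemma expectation_diff_le:
  fixes f h :: "'b \<Rightarrow> real"
  assumes "integrable (measure_pmf p) f" "integrable (measure_pmf p) h" "\<And>x. f x - h x \<le> c"
  shows "measure_pmf.expectation p f - measure_pmf.expectation p h \<le> c"
proof -
  have "measure_pmf.expectation p f - measure_pmf.expectation p h
      = measure_pmf.expectation p (\<lambda>x. f x - h x)"
    using assms(1,2) by simp
  also have "\<dots> \<le> c"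
    using assms by (intro expectation_le_const) auto
  finally show ?thesis .
qed

lemma expectation_affine:
  fixes f :: "'b \<Rightarrow> real"
  assumes "integrable (measure_pmf p) f"
  shows "measure_pmf.expectation p (\<lambda>x. c + k * f x) = c + k * measure_pmf.expectation p f"
  using assms by (simp add: measure_pmf.prob_space)

lemma expectation_bind_pmf:
  fixes f :: "'b \<Rightarrow> real"
  assumes "bounded (range f)"
  shows "measure_pmf.expectation (bind_pmf M N) f
    = measure_pmf.expectation M (\<lambda>x. measure_pmf.expectation (N x) f)"
proof -
  obtain B where "\<And>x. \<bar>f x\<bar> \<le> B"
    using assms unfolding bounded_range_iff_abs_le by blast
  then show ?thesis
    unfolding measure_pmf_bind
    by (intro integral_bind[where K="count_space UNIV" and B=B and B'=1])
       (auto simp: measure_pmf.finite_measure measure_pmf_in_subprob_algebra)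
qed

lemma Max_image_attained:
  assumes "finite A" "A \<noteq> {}"
  obtains a where "a \<in> A" "(MAX x\<in>A. f x) = f a"
proof -
  have "(MAX x\<in>A. f x) \<in> f ` A"
    using assms by (intro Max_in) simp_all
  then show ?thesis
    using that by blast
qed

lemma Max_image_diff_le:
  fixes f h :: "'b \<Rightarrow> real"
  assumes "finite A" "A \<noteq> {}" "\<And>x. x \<in> A \<Longrightarrow> f x - h x \<le> c"
  shows "(MAX x\<in>A. f x) - (MAX x\<in>A. h x) \<le> c"
proof -
  obtain x where "x \<in> A" "(MAX x\<in>A. f x) = f x"
    using Max_image_attained[OF assms(1,2)] .
  moreover have "h x \<le> (MAX x\<in>A. h x)"
    using \<open>x \<in> A\<close> assms(1) by simp
  ultimately show ?thesis
    using assms(3)[of x] by linarith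
qed

section \<open>Contractions on bounded functions\<close>

text \<open>Blackwell's monotonicity and discounting conditions, merged into a single inequality.\<close>

locale blackwell_contraction =
  fixes F :: "('s \<Rightarrow> real) \<Rightarrow> 's \<Rightarrow> real" and q :: real
  assumes q_nonneg: "0 \<le> q" and q_less_1: "q < 1"
    and bounded_image: "bounded (range f) \<Longrightarrow> bounded (range (F f))"
    and image_diff_le: "bounded (range f) \<Longrightarrow> bounded (range h) \<Longrightarrow> (\<And>s. f s - h s \<le> c)
      \<Longrightarrow> F f s - F h s \<le> q * c"
begin

lemma abs_image_diff_le:
  assumes "bounded (range f)" "bounded (range h)" "\<And>s. \<bar>f s - h s\<bar> \<le> c"
  shows "\<bar>F f s - F h s\<bar> \<le> q * c"
proof -
  have "f s - h s \<le> c" "h s - f s \<le> c" for s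
    using assms(3)[of s] by auto
  then show ?thesis
    using image_diff_le[OF assms(1,2)] image_diff_le[OF assms(2,1)] by (smt (verit))
qed

lemma le_if_diff_le_image_diff:
  assumes f: "bounded (range f)" and h: "bounded (range h)"
    and le: "\<And>s. f s - h s \<le> F f s - F h s"
  shows "f s \<le> h s"
proof -
  define M where "M = (SUP s. f s - h s)"
  have "bdd_above (range (\<lambda>s. f s - h s))"
    using bounded_imp_bdd_above[OF bounded_minus_comp[OF f h]] .
  then have upper: "f s - h s \<le> M" for s
    unfolding M_def by (intro cSUP_upper) auto
  have "f s - h s \<le> q * M" for s
    using le[of s] image_diff_le[OF f h upper, of s] by linarith
  then have "M \<le> q * M"
    unfolding M_def by (intro cSUP_least) auto
  then have "M \<le> 0"
    using q_less_1 by (smt (verit) mult_le_cancel_right1)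
  then show ?thesis
    using upper[of s] by simp
qed

lemma le_fixpoint:
  assumes "bounded (range v)" "bounded (range w)" "F w = w" "\<And>s. v s \<le> F v s"
  shows "v s \<le> w s"
proof (rule le_if_diff_le_image_diff[OF assms(1,2)])
  show "v s - w s \<le> F v s - F w s" for s
    using assms(3) assms(4)[of s] by simp
qed

lemma fixpoint_le:
  assumes "bounded (range v)" "bounded (range w)" "F w = w" "\<And>s. F v s \<le> v s"
  shows "w s \<le> v s"
proof (rule le_if_diff_le_image_diff[OF assms(2,1)])
  show "w s - v s \<le> F w s - F v s" for s
    using assms(3) assms(4)[of s] by simp
qed

lemma fixpoint_exists:
  obtains w where "bounded (range w)" "F w = w"
proof -
  txt \<open>Banach's theorem in the space of bounded continuous functions on the discrete copy of
    \<open>'s\<close>, where every bounded function is continuous.\<close>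
  have into_bcontfun: "(\<lambda>d. f (of_discrete d)) \<in> bcontfun" if "bounded (range f)" for f :: "'s \<Rightarrow> real"
  proof -
    have "bounded (range (\<lambda>d. f (of_discrete d)))"
      by (rule bounded_subset[OF that]) auto
    moreover have "continuous_on UNIV (\<lambda>d. f (of_discrete d))"
      unfolding continuous_on_open_invariant using open_discrete by blast
    ultimately show ?thesis
      by (simp add: bcontfun_def)
  qed
  define restrict :: "('s discrete \<Rightarrow>\<^sub>C real) \<Rightarrow> 's \<Rightarrow> real"
    where "restrict u s = apply_bcontfun u (discrete s)" for u s
  have bounded_restrict: "bounded (range (restrict u))" for u
    unfolding restrict_def by (rule bounded_subset[OF bounded_apply_bcontfun]) auto
  define G where "G u = Bcontfun (\<lambda>d. F (restrict u) (of_discrete d))" for u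
  have G_apply: "apply_bcontfun (G u) d = F (restrict u) (of_discrete d)" for u d
    unfolding G_def using into_bcontfun[OF bounded_image[OF bounded_restrict]]
    by (simp add: Bcontfun_inverse)
  have "dist (G u) (G v) \<le> q * dist u v" for u v
  proof (rule dist_bound)
    fix d
    have "\<bar>restrict u s - restrict v s\<bar> \<le> dist u v" for s
      unfolding restrict_def using dist_bounded[of u _ v] by (simp add: dist_real_def)
    then have "\<bar>F (restrict u) (of_discrete d) - F (restrict v) (of_discrete d)\<bar> \<le> q * dist u v"
      by (intro abs_image_diff_le bounded_restrict)
    then show "dist (G u d) (G v d) \<le> q * dist u v"
      by (simp add: G_apply dist_real_def)
  qed
  then obtain u where "G u = u"
    using banach_fix_type[OF q_nonneg q_less_1] by blast
  then have "F (restrict u) s = restrict u s" for s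
    using G_apply[of u "discrete s"] by (simp add: restrict_def discrete_inverse)
  then show ?thesis
    using that[OF bounded_restrict] by fast
qed

lemma iterates_tendsto_fixpoint:
  assumes z: "bounded (range z)" and w: "bounded (range w)" "F w = w"
  shows "(\<lambda>n. (F ^^ n) z s) \<longlonglongrightarrow> w s"
proof -
  have bounded_iterate: "bounded (range ((F ^^ n) z))" for n
  proof (induction n)
    case (Suc n)
    then show ?case by (simp add: bounded_image)
  qed (simp add: z)
  obtain C where C: "\<And>s. \<bar>z s - w s\<bar> \<le> C"
    using bounded_minus_comp[OF z w(1)] unfolding bounded_iff by auto
  have bound: "\<bar>(F ^^ n) z s - w s\<bar> \<le> q ^ n * C" for n s
  proof (induction n arbitrary: s)
    case 0
    then show ?case using C by simp
  next
    case (Suc n)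
    have "\<bar>F ((F ^^ n) z) s - F w s\<bar> \<le> q * (q ^ n * C)"
      by (intro abs_image_diff_le bounded_iterate w(1) Suc)
    then show ?case
      using w(2) by (simp add: mult.assoc)
  qed
  have geometric: "(\<lambda>n. q ^ n * C) \<longlonglongrightarrow> 0"
    using q_nonneg q_less_1 by (intro tendsto_mult_left_zero LIMSEQ_power_zero) auto
  have "(\<lambda>n. (F ^^ n) z s - w s) \<longlonglongrightarrow> 0"
    by (rule Lim_null_comparison[OF _ geometric]) (simp add: bound)
  then show ?thesis
    by (simp add: LIM_zero_iff)
qed

end

section \<open>Policy evaluation\<close>

lemma Mop_eq_expectation:
  "Mop P L bet gam pix w s
    = measure_pmf.expectation (pix s) (\<lambda>a. - L s a + gam * measure_pmf.expectation (P a s) w - bet)"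
  unfolding Mop_def
  by (subst integral_measure_pmf_real[where A=UNIV]) (auto simp: algebra_simps intro: sum.cong)

lemma disc_return_Cons:
  "disc_return L bet gam g (x # xs) = sw_reward L bet g x + gam * disc_return L bet gam g xs"
  unfolding disc_return_def length_Cons sum.lessThan_Suc_shift
  by (simp add: sum_distrib_left mult.assoc)

locale switching_game =
  fixes P :: "'a::finite \<Rightarrow> 's \<Rightarrow> 's pmf" and pie :: "'s \<Rightarrow> 'a pmf"
    and L :: "'s \<Rightarrow> 'a \<Rightarrow> real" and bet gam :: real
  assumes L_bounded: "\<exists>B. \<forall>s a. \<bar>L s a\<bar> \<le> B"
    and gam_nonneg: "0 \<le> gam" and gam_less_1: "gam < 1"
begin

definition q_value :: "('s \<Rightarrow> real) \<Rightarrow> 's \<Rightarrow> 'a \<Rightarrow> real" where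
  "q_value w s a = - L s a + gam * measure_pmf.expectation (P a s) w"

definition exploit_op :: "('s \<Rightarrow> real) \<Rightarrow> 's \<Rightarrow> real" where
  "exploit_op w s = measure_pmf.expectation (pie s) (q_value w s)"

definition policy_op :: "('s \<Rightarrow> 'a pmf) \<Rightarrow> ('s \<Rightarrow> bool) \<Rightarrow> ('s \<Rightarrow> real) \<Rightarrow> 's \<Rightarrow> real" where
  "policy_op pix g w s = (if g s then Mop P L bet gam pix w s else exploit_op w s)"

lemma Mop_eq_expectation_q_value:
  "Mop P L bet gam pix w s = measure_pmf.expectation (pix s) (\<lambda>a. q_value w s a - bet)"
  unfolding Mop_eq_expectation q_value_def ..

lemma q_value_bounded:
  assumes "bounded (range w)"
  obtains M where "\<And>s a. \<bar>q_value w s a\<bar> \<le> M"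
proof -
  obtain B where B: "\<And>s a. \<bar>L s a\<bar> \<le> B"
    using L_bounded by blast
  obtain C where C: "\<And>s. \<bar>w s\<bar> \<le> C"
    using assms unfolding bounded_range_iff_abs_le by blast
  have "\<bar>q_value w s a\<bar> \<le> B + gam * C" for s a
  proof -
    have "\<bar>measure_pmf.expectation (P a s) w\<bar> \<le> C"
      by (rule abs_expectation_le) (rule C)
    then have "\<bar>gam * measure_pmf.expectation (P a s) w\<bar> \<le> gam * C"
      using gam_nonneg by (simp add: abs_mult mult_left_mono)
    then show ?thesis
      using B[of s a] unfolding q_value_def by linarith
  qed
  then show ?thesis
    using that by blast
qed

lemma q_value_diff_le:
  assumes "bounded (range f)" "bounded (range h)" "\<And>s. f s - h s \<le> c"
  shows "q_value f s a - q_value h s a \<le> gam * c"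
proof -
  have "measure_pmf.expectation (P a s) f - measure_pmf.expectation (P a s) h \<le> c"
    using assms by (intro expectation_diff_le integrable_pmf_if_bounded)
  then show ?thesis
    unfolding q_value_def using gam_nonneg by (simp add: right_diff_distrib[symmetric] mult_left_mono)
qed

lemma bounded_policy_op:
  assumes "bounded (range w)"
  shows "bounded (range (policy_op pix g w))"
proof -
  obtain M where M: "\<And>s a. \<bar>q_value w s a\<bar> \<le> M"
    using q_value_bounded[OF assms] by blast
  have "\<bar>policy_op pix g w s\<bar> \<le> M + \<bar>bet\<bar>" for s
  proof -
    have "\<bar>q_value w s a - bet\<bar> \<le> M + \<bar>bet\<bar>" "\<bar>q_value w s a\<bar> \<le> M + \<bar>bet\<bar>" for a
      using M[of s a] by auto
    then have "\<bar>measure_pmf.expectation (pix s) (\<lambda>a. q_value w s a - bet)\<bar> \<le> M + \<bar>bet\<bar>"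
      "\<bar>measure_pmf.expectation (pie s) (q_value w s)\<bar> \<le> M + \<bar>bet\<bar>"
      by (intro abs_expectation_le; blast)+
    then show ?thesis
      unfolding policy_op_def Mop_eq_expectation_q_value exploit_op_def by simp
  qed
  then show ?thesis
    unfolding bounded_range_iff_abs_le by blast
qed

lemma exploit_op_diff_le:
  assumes "bounded (range f)" "bounded (range h)" "\<And>s. f s - h s \<le> c"
  shows "exploit_op f s - exploit_op h s \<le> gam * c"
  unfolding exploit_op_def using q_value_diff_le[OF assms] by (intro expectation_diff_le) simp_all

lemma Mop_diff_le:
  assumes "bounded (range f)" "bounded (range h)" "\<And>s. f s - h s \<le> c"
  shows "Mop P L bet gam pix f s - Mop P L bet gam pix h s \<le> gam * c"
  unfolding Mop_eq_expectation_q_value using q_value_diff_le[OF assms]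
  by (intro expectation_diff_le) simp_all

lemma policy_op_diff_le:
  assumes "bounded (range f)" "bounded (range h)" "\<And>s. f s - h s \<le> c"
  shows "policy_op pix g f s - policy_op pix g h s \<le> gam * c"
  unfolding policy_op_def using exploit_op_diff_le[OF assms] Mop_diff_le[OF assms] by simp

lemma blackwell_policy_op: "blackwell_contraction (policy_op pix g) gam"
  by unfold_locales (simp_all add: gam_nonneg gam_less_1 bounded_policy_op policy_op_diff_le)

lemma bounded_disc_return: "bounded (range (disc_return L bet gam g))"
proof -
  obtain B where B: "\<And>s a. \<bar>L s a\<bar> \<le> B"
    using L_bounded by blast
  define K where "K = (B + \<bar>bet\<bar>) / (1 - gam)"
  have reward: "\<bar>sw_reward L bet g x\<bar> \<le> B + \<bar>bet\<bar>" for x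
    using B[of "fst x" "snd x"] unfolding sw_reward_def by auto
  have "0 \<le> B"
    using order_trans[OF abs_ge_zero B] .
  then have "0 \<le> K"
    using gam_less_1 unfolding K_def by simp
  have "\<bar>disc_return L bet gam g xs\<bar> \<le> K" for xs
  proof (induction xs)
    case Nil
    then show ?case using \<open>0 \<le> K\<close> by (simp add: disc_return_def)
  next
    case (Cons x xs)
    have "\<bar>gam * disc_return L bet gam g xs\<bar> \<le> gam * K"
      using Cons gam_nonneg by (simp add: abs_mult mult_left_mono)
    moreover have "B + \<bar>bet\<bar> + gam * K = K"
      using gam_less_1 unfolding K_def by (simp add: field_simps)
    ultimately show ?case
      using reward[of x] unfolding disc_return_Cons by linarith
  qed
  then show ?thesis
    unfolding bounded_range_iff_abs_le by blast
qed

lemma expectation_traj_Suc: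
  "measure_pmf.expectation (traj P pie pix g (Suc n) s) (disc_return L bet gam g)
    = policy_op pix g (\<lambda>s'. measure_pmf.expectation (traj P pie pix g n s') (disc_return L bet gam g)) s"
proof -
  let ?R = "disc_return L bet gam g"
  let ?V = "\<lambda>s'. measure_pmf.expectation (traj P pie pix g n s') ?R"
  have bounded_V: "bounded (range ?V)"
    using bounded_disc_return unfolding bounded_range_iff_abs_le by (metis abs_expectation_le)
  have step: "measure_pmf.expectation (P a s)
      (\<lambda>s'. measure_pmf.expectation (traj P pie pix g n s') (\<lambda>xs. ?R ((s, a) # xs)))
    = q_value ?V s a - (if g s then bet else 0)" for a
  proof -
    have "measure_pmf.expectation (traj P pie pix g n s') (\<lambda>xs. ?R ((s, a) # xs))
        = sw_reward L bet g (s, a) + gam * ?V s'" for s'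
      unfolding disc_return_Cons
      by (simp add: expectation_affine integrable_pmf_if_bounded[OF bounded_disc_return])
    then show ?thesis
      by (simp add: expectation_affine integrable_pmf_if_bounded[OF bounded_V] q_value_def sw_reward_def)
  qed
  have "measure_pmf.expectation (traj P pie pix g (Suc n) s) ?R
      = measure_pmf.expectation (act pie pix g s) (\<lambda>a. q_value ?V s a - (if g s then bet else 0))"
    by (simp add: expectation_bind_pmf[OF bounded_disc_return] step)
  then show ?thesis
    by (simp add: act_def policy_op_def Mop_eq_expectation_q_value exploit_op_def)
qed

lemma expectation_traj_eq_iterate:
  "(\<lambda>s. measure_pmf.expectation (traj P pie pix g n s) (disc_return L bet gam g))
    = (policy_op pix g ^^ n) (\<lambda>_. 0)"
proof (induction n)
  case 0
  show ?case by (simp add: disc_return_def)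
next
  case (Suc n)
  show ?case
    by (simp add: expectation_traj_Suc Suc.IH[symmetric] del: traj.simps)
qed

lemma sw_value_eq_policy_fixpoint:
  assumes "bounded (range w)" "policy_op pix g w = w"
  shows "sw_value P pie L bet gam pix g = w"
proof
  interpret blackwell_contraction "policy_op pix g" gam
    by (rule blackwell_policy_op)
  fix s
  have "(\<lambda>n. (policy_op pix g ^^ n) (\<lambda>_. 0) s) \<longlonglongrightarrow> w s"
    by (rule iterates_tendsto_fixpoint[OF _ assms]) simp
  then show "sw_value P pie L bet gam pix g s = w s"
    unfolding sw_value_def using fun_cong[OF expectation_traj_eq_iterate] by (simp add: limI)
qed

lemma
  shows bounded_sw_value: "bounded (range (sw_value P pie L bet gam pix g))"
    and policy_op_sw_value: "policy_op pix g (sw_value P pie L bet gam pix g) = sw_value P pie L bet gam pix g"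
proof -
  interpret blackwell_contraction "policy_op pix g" gam
    by (rule blackwell_policy_op)
  obtain w where "bounded (range w)" "policy_op pix g w = w"
    by (rule fixpoint_exists)
  with sw_value_eq_policy_fixpoint show "bounded (range (sw_value P pie L bet gam pix g))"
    "policy_op pix g (sw_value P pie L bet gam pix g) = sw_value P pie L bet gam pix g"
    by simp_all
qed

section \<open>The optimality operator\<close>

text \<open>Randomising the exploration action cannot beat the best single action, so it suffices to
  maximise over the actions in \<open>Ax\<close>.\<close>

definition bellman_op :: "'a set \<Rightarrow> ('s \<Rightarrow> real) \<Rightarrow> 's \<Rightarrow> real" where
  "bellman_op Ax w s = max (exploit_op w s) (MAX a\<in>Ax. q_value w s a - bet)"

lemma bounded_bellman_op:
  assumes "Ax \<noteq> {}" "bounded (range w)"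
  shows "bounded (range (bellman_op Ax w))"
proof -
  obtain M where M: "\<And>s a. \<bar>q_value w s a\<bar> \<le> M"
    using q_value_bounded[OF assms(2)] by blast
  have "\<bar>bellman_op Ax w s\<bar> \<le> M + \<bar>bet\<bar>" for s
  proof -
    have "\<bar>exploit_op w s\<bar> \<le> M"
      unfolding exploit_op_def using M by (rule abs_expectation_le)
    obtain a where "(MAX a\<in>Ax. q_value w s a - bet) = q_value w s a - bet"
      using Max_image_attained[OF finite assms(1)] .
    then show ?thesis
      using \<open>\<bar>exploit_op w s\<bar> \<le> M\<close> M[of s a] unfolding bellman_op_def by linarith
  qed
  then show ?thesis
    unfolding bounded_range_iff_abs_le by blast
qed

lemma bellman_op_diff_le:
  assumes "Ax \<noteq> {}" "bounded (range f)" "bounded (range h)" "\<And>s. f s - h s \<le> c"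
  shows "bellman_op Ax f s - bellman_op Ax h s \<le> gam * c"
proof -
  have "exploit_op f s - exploit_op h s \<le> gam * c"
    using assms(2-4) by (rule exploit_op_diff_le)
  moreover have "(MAX a\<in>Ax. q_value f s a - bet) - (MAX a\<in>Ax. q_value h s a - bet) \<le> gam * c"
    using q_value_diff_le[OF assms(2-4)] assms(1) by (intro Max_image_diff_le) simp_all
  ultimately show ?thesis
    unfolding bellman_op_def by linarith
qed

lemma blackwell_bellman_op:
  assumes "Ax \<noteq> {}"
  shows "blackwell_contraction (bellman_op Ax) gam"
  by unfold_locales (simp_all add: assms gam_nonneg gam_less_1 bounded_bellman_op bellman_op_diff_le)

lemma policy_op_le_bellman_op:
  assumes "adm_xplr Ax pix"
  shows "policy_op pix g w s \<le> bellman_op Ax w s"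
proof (cases "g s")
  case True
  have "measure_pmf.expectation (pix s) (\<lambda>a. q_value w s a - bet) \<le> (MAX a\<in>Ax. q_value w s a - bet)"
    using assms unfolding adm_xplr_def
    by (intro measure_pmf.integral_le_const) (auto simp: AE_measure_pmf_iff intro!: Max_ge)
  then show ?thesis
    using True unfolding policy_op_def Mop_eq_expectation_q_value bellman_op_def by simp
qed (simp add: policy_op_def bellman_op_def)

lemma greedy_policy_exists:
  assumes "Ax \<noteq> {}"
  obtains pix g where "adm_xplr Ax pix" "policy_op pix g w = bellman_op Ax w"
proof -
  have "\<forall>s. \<exists>a. a \<in> Ax \<and> q_value w s a - bet = (MAX a\<in>Ax. q_value w s a - bet)"
    by (metis Max_image_attained[OF finite assms])
  then obtain best where best: "\<And>s. best s \<in> Ax"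
    "\<And>s. q_value w s (best s) - bet = (MAX a\<in>Ax. q_value w s a - bet)"
    using choice[of "\<lambda>s a. a \<in> Ax \<and> q_value w s a - bet = (MAX a\<in>Ax. q_value w s a - bet)"] by blast
  define g where "g s = (exploit_op w s \<le> (MAX a\<in>Ax. q_value w s a - bet))" for s
  have "adm_xplr Ax (\<lambda>s. return_pmf (best s))"
    using best(1) by (simp add: adm_xplr_def)
  moreover have "policy_op (\<lambda>s. return_pmf (best s)) g w = bellman_op Ax w"
    by (auto simp: fun_eq_iff policy_op_def Mop_eq_expectation_q_value bellman_op_def g_def best(2))
  ultimately show ?thesis
    by (rule that)
qed

lemma sw_value_le_bellman_fixpoint:
  assumes "Ax \<noteq> {}" "adm_xplr Ax pix" "bounded (range w)" "bellman_op Ax w = w"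
  shows "sw_value P pie L bet gam pix g s \<le> w s"
proof -
  interpret blackwell_contraction "bellman_op Ax" gam
    by (rule blackwell_bellman_op[OF assms(1)])
  show ?thesis
  proof (rule le_fixpoint[OF bounded_sw_value assms(3,4)])
    show "sw_value P pie L bet gam pix g s \<le> bellman_op Ax (sw_value P pie L bet gam pix g) s" for s
      using policy_op_le_bellman_op[OF assms(2)] policy_op_sw_value by metis
  qed
qed

lemma v_opt_eq_bellman_fixpoint:
  assumes "Ax \<noteq> {}" "bounded (range w)" "bellman_op Ax w = w"
  shows "v_opt P pie Ax L bet gam = w"
proof
  fix s
  obtain pix g where greedy: "adm_xplr Ax pix" "policy_op pix g w = bellman_op Ax w"
    using greedy_policy_exists[OF assms(1)] .
  then have "sw_value P pie L bet gam pix g = w"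
    using assms(2,3) by (intro sw_value_eq_policy_fixpoint) simp_all
  then show "v_opt P pie Ax L bet gam s = w s"
    unfolding v_opt_def using greedy(1) sw_value_le_bellman_fixpoint[OF assms(1) _ assms(2,3)]
    by (intro antisym cSUP_least cSUP_upper2[where x="(pix, g)"] bdd_aboveI2) auto
qed

lemma
  assumes "Ax \<noteq> {}"
  shows bounded_v_opt: "bounded (range (v_opt P pie Ax L bet gam))"
    and bellman_op_v_opt: "bellman_op Ax (v_opt P pie Ax L bet gam) = v_opt P pie Ax L bet gam"
proof -
  interpret blackwell_contraction "bellman_op Ax" gam
    by (rule blackwell_bellman_op[OF assms])
  obtain w where w: "bounded (range w)" "bellman_op Ax w = w"
    by (rule fixpoint_exists)
  with v_opt_eq_bellman_fixpoint[OF assms w] show "bounded (range (v_opt P pie Ax L bet gam))"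
    "bellman_op Ax (v_opt P pie Ax L bet gam) = v_opt P pie Ax L bet gam"
    by simp_all
qed

lemma optimal_pair_exists:
  assumes "Ax \<noteq> {}"
  shows "\<exists>pix g. optimal_pair P pie Ax L bet gam pix g"
proof -
  obtain pix g where greedy: "adm_xplr Ax pix"
    "policy_op pix g (v_opt P pie Ax L bet gam) = bellman_op Ax (v_opt P pie Ax L bet gam)"
    using greedy_policy_exists[OF assms] .
  then have "sw_value P pie L bet gam pix g = v_opt P pie Ax L bet gam"
    by (simp add: sw_value_eq_policy_fixpoint bounded_v_opt bellman_op_v_opt assms)
  then have "optimal_pair P pie Ax L bet gam pix g"
    using greedy(1) by (simp add: optimal_pair_def)
  then show ?thesis
    by blast
qed

lemma sw_value_le_v_opt:
  assumes "Ax \<noteq> {}" "adm_xplr Ax pix"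
  shows "sw_value P pie L bet gam pix g s \<le> v_opt P pie Ax L bet gam s"
  using assms bounded_v_opt[OF assms(1)] bellman_op_v_opt[OF assms(1)]
  by (rule sw_value_le_bellman_fixpoint)

lemma policy_op_intervene_where_Mop_eq:
  assumes "policy_op pix g w = w"
  shows "policy_op pix (\<lambda>s. Mop P L bet gam pix w s = w s) w = w"
proof
  fix s
  have "policy_op pix g w s = w s"
    using assms by simp
  then show "policy_op pix (\<lambda>s. Mop P L bet gam pix w s = w s) w s = w s"
    unfolding policy_op_def by (cases "g s") auto
qed

lemma optimal_pair_intervene_where_Mop_eq:
  assumes "optimal_pair P pie Ax L bet gam pix g"
  shows "optimal_pair P pie Ax L bet gam pix
    (\<lambda>s. Mop P L bet gam pix (v_opt P pie Ax L bet gam) s = v_opt P pie Ax L bet gam s)"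
proof -
  have v: "sw_value P pie L bet gam pix g = v_opt P pie Ax L bet gam"
    using assms unfolding optimal_pair_def by auto
  then have "policy_op pix g (v_opt P pie Ax L bet gam) = v_opt P pie Ax L bet gam"
    using policy_op_sw_value by metis
  then have "sw_value P pie L bet gam pix
      (\<lambda>s. Mop P L bet gam pix (v_opt P pie Ax L bet gam) s = v_opt P pie Ax L bet gam s)
    = v_opt P pie Ax L bet gam"
    using bounded_sw_value[of pix g] v
    by (intro sw_value_eq_policy_fixpoint policy_op_intervene_where_Mop_eq) simp_all
  then show ?thesis
    using assms unfolding optimal_pair_def by simp
qed

section \<open>Interventions at small uncertainty\<close>

lemma sw_value_nonpos:
  assumes "\<And>s a. 0 \<le> L s a" "0 \<le> bet"
  shows "sw_value P pie L bet gam pix g s \<le> 0"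
proof -
  interpret blackwell_contraction "policy_op pix g" gam
    by (rule blackwell_policy_op)
  have "q_value (\<lambda>_. 0) s a - bet \<le> 0" "q_value (\<lambda>_. 0) s a \<le> 0" for s a
    using assms(1)[of s a] assms(2) by (simp_all add: q_value_def)
  then have "policy_op pix g (\<lambda>_. 0) s \<le> 0" for s
    unfolding policy_op_def Mop_eq_expectation_q_value exploit_op_def
    by (simp add: expectation_le_const)
  then show ?thesis
    using fixpoint_le[OF _ bounded_sw_value policy_op_sw_value, of "\<lambda>_. 0"] by simp
qed

lemma sw_value_le_neg_bet:
  assumes "\<And>s a. 0 \<le> L s a" "0 \<le> bet" "g s"
  shows "sw_value P pie L bet gam pix g s \<le> - bet"
proof -
  let ?V = "sw_value P pie L bet gam pix g"
  have "measure_pmf.expectation (P a s) ?V \<le> 0" for a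
    using integrable_pmf_if_bounded[OF bounded_sw_value] sw_value_nonpos[OF assms(1,2)]
    by (rule expectation_le_const)
  then have discounted_nonpos: "gam * measure_pmf.expectation (P a s) ?V \<le> 0" for a
    by (rule mult_nonneg_nonpos[OF gam_nonneg])
  have "q_value ?V s a - bet \<le> - bet" for a
    using assms(1)[of s a] discounted_nonpos[of a] unfolding q_value_def by linarith
  then have "Mop P L bet gam pix ?V s \<le> - bet"
    unfolding Mop_eq_expectation_q_value by (simp add: expectation_le_const)
  moreover have "Mop P L bet gam pix ?V s = ?V s"
    using fun_cong[OF policy_op_sw_value[of pix g], of s] assms(3) by (simp add: policy_op_def)
  ultimately show ?thesis
    by simp
qed

lemma sw_value_never_intervene_ge:
  assumes "\<And>s a. L s a \<le> l"
  shows "- l / (1 - gam) \<le> sw_value P pie L bet gam pix (\<lambda>_. False) s"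
proof -
  interpret blackwell_contraction "policy_op pix (\<lambda>_. False)" gam
    by (rule blackwell_policy_op)
  define c where "c = - l / (1 - gam)"
  have "- l + gam * c = c"
    using gam_less_1 unfolding c_def by (simp add: field_simps)
  then have q_value_ge: "c \<le> q_value (\<lambda>_. c) s a" for s a
    using assms[of s a] by (simp add: q_value_def)
  have "c \<le> policy_op pix (\<lambda>_. False) (\<lambda>_. c) s" for s
    unfolding policy_op_def exploit_op_def by (simp add: expectation_ge_const q_value_ge)
  then show ?thesis
    unfolding c_def[symmetric]
    using le_fixpoint[OF _ bounded_sw_value policy_op_sw_value, of "\<lambda>_. c"] by simp
qed

lemma optimal_pair_never_intervenes:
  assumes "Ax \<noteq> {}" "\<And>s a. 0 \<le> L s a" "\<And>s a. L s a \<le> l" "l < bet * (1 - gam)"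
    and "optimal_pair P pie Ax L bet gam pix g"
  shows "\<not> g s"
proof
  assume "g s"
  obtain a0 where "a0 \<in> Ax"
    using assms(1) by blast
  then have adm: "adm_xplr Ax (\<lambda>_. return_pmf a0)"
    by (simp add: adm_xplr_def)
  have "0 \<le> bet"
    using assms(2)[of s a0] assms(3)[of s a0] assms(4) gam_less_1 by (smt (verit) mult_le_0_iff)
  have "- l / (1 - gam) \<le> sw_value P pie L bet gam (\<lambda>_. return_pmf a0) (\<lambda>_. False) s"
    using assms(3) by (rule sw_value_never_intervene_ge)
  also have "\<dots> \<le> v_opt P pie Ax L bet gam s"
    using assms(1) adm by (rule sw_value_le_v_opt)
  also have "\<dots> = sw_value P pie L bet gam pix g s"
    using assms(5) unfolding optimal_pair_def by simp
  also have "\<dots> \<le> - bet"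
    using assms(2) \<open>0 \<le> bet\<close> \<open>g s\<close> by (rule sw_value_le_neg_bet)
  finally have "bet * (1 - gam) \<le> l"
    using gam_less_1 by (simp add: field_simps)
  then show False
    using assms(4) by simp
qed

end

lemma interventions_vanish_as_uncertainty_vanishes:
  fixes P :: "'a::finite \<Rightarrow> 's \<Rightarrow> 's pmf" and Lf :: "real \<Rightarrow> 's \<Rightarrow> 'a \<Rightarrow> real"
  assumes "Ax \<noteq> {}" "0 \<le> gam" "gam < 1" "0 < bet"
    and "\<And>l. 0 < l \<Longrightarrow> (\<forall>s a. 0 \<le> Lf l s a \<and> Lf l s a \<le> l)
      \<and> optimal_pair P pie Ax (Lf l) bet gam (pixf l) (gf l)"
  shows "\<forall>\<^sub>F l in at_right 0. \<forall>s. \<not> gf l s"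
proof -
  have "\<not> gf l s" if "0 < l" "l < bet * (1 - gam)" for l s
  proof -
    interpret switching_game P pie "Lf l" bet gam
      using assms(2,3) assms(5)[OF that(1)] by unfold_locales (auto intro!: exI[of _ l])
    show ?thesis
      using assms(1) assms(5)[OF that(1)] that(2) by (intro optimal_pair_never_intervenes) auto
  qed
  moreover have "0 < bet * (1 - gam)"
    using assms(3,4) by simp
  ultimately show ?thesis
    unfolding eventually_at_right_field by blast
qed

theorem proposition2:
  fixes P :: "'a::finite \<Rightarrow> 's::countable \<Rightarrow> 's pmf"
    and pie :: "'s \<Rightarrow> 'a pmf"
    and Aexp Ax :: "'a set"
    and L :: "'s \<Rightarrow> 'a \<Rightarrow> real"
    and bet gam :: real
  assumes exploit_supp: "\<forall>s. set_pmf (pie s) \<subseteq> Aexp"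
    and Ax_ne: "Ax \<noteq> {}"
    and gam: "0 < gam" "gam < 1"
    and bet: "0 < bet"
    and L_nonneg: "\<forall>s a. 0 \<le> L s a"
    and L_bdd: "\<exists>B. \<forall>s a. L s a \<le> B"
  shows
    "((\<exists>pix g. optimal_pair P pie Ax L bet gam pix g) \<and>
      (\<forall>pix g. optimal_pair P pie Ax L bet gam pix g \<longrightarrow>
         optimal_pair P pie Ax L bet gam pix
           (\<lambda>s. Mop P L bet gam pix (v_opt P pie Ax L bet gam) s = v_opt P pie Ax L bet gam s)))
     \<and>
     (\<forall>(Lf :: real \<Rightarrow> 's \<Rightarrow> 'a \<Rightarrow> real) pixf gf.
        (\<forall>l>0. (\<forall>s a. 0 \<le> Lf l s a) \<and> (\<forall>s a. Lf l s a \<le> l) \<and> (\<exists>s a. Lf l s a = l)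
               \<and> optimal_pair P pie Ax (Lf l) bet gam (pixf l) (gf l))
        \<longrightarrow> (\<forall>s. ((\<lambda>l. n_interv P pie (pixf l) (gf l) s) \<longlongrightarrow> 0) (at_right 0)))"
proof (intro conjI allI impI)
  interpret switching_game P pie L bet gam
    using L_nonneg L_bdd gam by unfold_locales (auto simp: abs_of_nonneg)
  show "\<exists>pix g. optimal_pair P pie Ax L bet gam pix g"
    using Ax_ne by (rule optimal_pair_exists)
  show "optimal_pair P pie Ax L bet gam pix
      (\<lambda>s. Mop P L bet gam pix (v_opt P pie Ax L bet gam) s = v_opt P pie Ax L bet gam s)"
    if "optimal_pair P pie Ax L bet gam pix g" for pix g
    using that by (rule optimal_pair_intervene_where_Mop_eq)
next
  fix Lf :: "real \<Rightarrow> 's \<Rightarrow> 'a \<Rightarrow> real" and pixf gf s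
  assume "\<forall>l>0. (\<forall>s a. 0 \<le> Lf l s a) \<and> (\<forall>s a. Lf l s a \<le> l) \<and> (\<exists>s a. Lf l s a = l)
    \<and> optimal_pair P pie Ax (Lf l) bet gam (pixf l) (gf l)"
  then have "\<forall>\<^sub>F l in at_right 0. \<forall>s. \<not> gf l s"
    using Ax_ne gam bet interventions_vanish_as_uncertainty_vanishes[of Ax gam bet Lf P pie pixf gf]
    by auto
  then have "\<forall>\<^sub>F l in at_right 0. n_interv P pie (pixf l) (gf l) s = 0"
    by eventually_elim (simp add: n_interv_def)
  then show "((\<lambda>l. n_interv P pie (pixf l) (gf l) s) \<longlongrightarrow> 0) (at_right 0)"
    by (rule tendsto_eventually)
qed

end
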